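(* Let $\mathcal{C}_1$ and $\mathcal{C}_2$ be hypergraphs on disjoint vertex sets $V_1$ and $V_2$. Let $\mathcal{C}(\operatorname{Ind}(\mathcal{C}_1)*\operatorname{Ind}(\mathcal{C}_2))$ be the hypergraph of minimal non-faces of the join $\operatorname{Ind}(\mathcal{C}_1)*\operatorname{Ind}(\mathcal{C}_2)$ (a complex on $V_1\cup V_2$; this hypergraph has edge set $\mathcal{C}_1\cup\mathcal{C}_2$). Then $\psi(\mathcal{C}(\operatorname{Ind}(\mathcal{C}_1)*\operatorname{Ind}(\mathcal{C}_2)))=\psi(\mathcal{C}_1)+\psi(\mathcal{C}_2)$ (with $\infty+a=\infty$).
   Context: A hypergraph $\mathcal{C}$ on a finite vertex set $V$ is a family of pairwise incomparable subsets of $V$ (its edges), each of cardinality at least $2$; vertices lying in no edge are allowed. The independence complex $\operatorname{Ind}(\mathcal{C})$ is the simplicial complex on $V$ whose faces are the subsets of $V$ containing no edge of $\mathcal{C}$. For a simplicial complex $\Delta$ on $V$ (containing all singletons), $\mathcal{C}(\Delta)$ is the hypergraph on $V$ of inclusion-minimal non-faces of $\Delta$; $\operatorname{Ind}(\mathcal{C}(\Delta))=\Delta$. For an edge $F$: $\mathcal{C}-F$ is the hypergraph on $V$ with edge set $\mathcal{C}\setminus\{F\}$; $N_{\mathcal{C}}(F)=\bigcup\{E\setminus F : E\in\mathcal{C},\ |E\setminus F|=1\}$; and $\mathcal{C}:F$ is the hypergraph on $V\setminus(F\cup N_{\mathcal{C}}(F))$ whose edges are the members of cardinality at least $2$ among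 the inclusion-minimal members of the family $\{E\setminus F : E\in \mathcal{C}-F\}$. The number $\psi(\mathcal{C})\in\mathbb{Z}_{\ge 0}\cup\{\infty\}$ is defined recursively: $\psi(\mathcal{C})=0$ if $V=\emptyset$; $\psi(\mathcal{C})=\infty$ if $V\neq\emptyset$ and $\mathcal{C}$ has no edges; otherwise $\psi(\mathcal{C})=\max_{F\in\mathcal{C}}\min\{\psi(\mathcal{C}-F),\ \psi(\mathcal{C}:F)+|F|-1\}$. *)

theory Defs
  imports Main "HOL-Library.Extended_Nat"
begin

definition hypergraph :: "'a set \<Rightarrow> 'a set set \<Rightarrow> bool" where
  "hypergraph V C \<longleftrightarrow> finite V \<and> (\<forall>E\<in>C. E \<subseteq> V \<and> 2 \<le> card E)
     \<and> (\<forall>E\<in>C. \<forall>E'\<in>C. E \<subseteq> E' \<longrightarrow> E = E')"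

definition Ind :: "'a set \<Rightarrow> 'a set set \<Rightarrow> 'a set set" where
  "Ind V C = {S. S \<subseteq> V \<and> \<not> (\<exists>E\<in>C. E \<subseteq> S)}"

definition join :: "'a set set \<Rightarrow> 'a set set \<Rightarrow> 'a set set" where
  "join D1 D2 = {S1 \<union> S2 | S1 S2. S1 \<in> D1 \<and> S2 \<in> D2}"

definition min_nonfaces :: "'a set \<Rightarrow> 'a set set \<Rightarrow> 'a set set" where
  "min_nonfaces V D = {S. S \<subseteq> V \<and> S \<notin> D \<and> (\<forall>T. T \<subset> S \<longrightarrow> T \<in> D)}"

definition nbhd :: "'a set set \<Rightarrow> 'a set \<Rightarrow> 'a set" where
  "nbhd C F = \<Union>{E - F | E. E \<in> C \<and> card (E - F) = 1}"

definition minimal_members :: "'a set set \<Rightarrow> 'a set set" where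
  "minimal_members S = {G \<in> S. \<not> (\<exists>H\<in>S. H \<subset> G)}"

text \<open>Edges of C:F (its vertex set is V - (F \<union> nbhd C F)).\<close>
definition colon :: "'a set set \<Rightarrow> 'a set \<Rightarrow> 'a set set" where
  "colon C F = {G \<in> minimal_members {E - F | E. E \<in> C - {F}}. 2 \<le> card G}"

function psi :: "'a set \<Rightarrow> 'a set set \<Rightarrow> enat" where
  "psi V C =
    (if \<not> (finite V \<and> (\<forall>E\<in>C. E \<subseteq> V \<and> E \<noteq> {})) then 0
     else if V = {} then 0
     else if C = {} then \<infinity>
     else Max ((\<lambda>F. min (psi V (C - {F}))
                         (psi (V - (F \<union> nbhd C F)) (colon C F) + enat (card F - 1))) ` C))"
  by pat_completeness auto
termination
proof (relation "measures [\<lambda>(V, C). card V, \<lambda>(V, C). card C]", goal_cases)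
  case 1 then show ?case by auto
next
  case (2 V C F)
  then have "C \<subseteq> Pow V" by auto
  with 2 have "finite C" by (meson finite_Pow_iff finite_subset)
  with 2 have "card (C - {F}) < card C" by (meson card_Diff1_less)
  then show ?case by simp
next
  case (3 V C F)
  then have "F \<subseteq> V" "F \<noteq> {}" by auto
  then have "V - (F \<union> nbhd C F) \<subset> V" by blast
  with 3 have "card (V - (F \<union> nbhd C F)) < card V" by (meson psubset_card_mono)
  then show ?case by simp
qed

end

theory Submission
  imports Defs
begin

text \<open>
  Deleting or contracting an edge \<open>F\<close> of \<open>C\<^sub>1\<close> leaves the disjoint part untouched:
  \<open>(C\<^sub>1 \<union> C\<^sub>2) - F = (C\<^sub>1 - F) \<union> C\<^sub>2\<close> and \<open>(C\<^sub>1 \<union> C\<^sub>2) : F = (C\<^sub>1 : F) \<union> C\<^sub>2\<close>, on vertex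
  sets that still split off \<open>V\<^sub>2\<close>. By induction on the total size, both recursive terms
  of the branch at \<open>F\<close> are therefore shifted by \<open>\<psi>(C\<^sub>2)\<close>; since \<open>min\<close> and \<open>Max\<close>
  commute with adding a constant, every branch of the union equals a branch of one
  part plus \<open>\<psi>\<close> of the other, and the maxima over both parts agree.
\<close>

declare psi.simps[simp del]

lemma hypergraph_finite_edges: "hypergraph V C \<Longrightarrow> finite C"
  unfolding hypergraph_def by (meson Pow_iff finite_Pow_iff finite_subset subsetI)

lemma hypergraph_edge_subset: "hypergraph V C \<Longrightarrow> E \<in> C \<Longrightarrow> E \<subseteq> V"
  unfolding hypergraph_def by fastforce

lemma hypergraph_card_edge: "hypergraph V C \<Longrightarrow> E \<in> C \<Longrightarrow> 2 \<le> card E"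
  unfolding hypergraph_def by fastforce

lemma hypergraph_edge_nonempty: "hypergraph V C \<Longrightarrow> E \<in> C \<Longrightarrow> E \<noteq> {}"
  using hypergraph_card_edge by fastforce

lemma hypergraph_antichain:
  "hypergraph V C \<Longrightarrow> E \<in> C \<Longrightarrow> E' \<in> C \<Longrightarrow> E \<subseteq> E' \<Longrightarrow> E = E'"
  unfolding hypergraph_def by fastforce

lemma hypergraph_Diff_edge: "hypergraph V C \<Longrightarrow> hypergraph V (C - {F})"
  unfolding hypergraph_def by blast

lemma hypergraph_disjoint_Un:
  assumes h1: "hypergraph V1 C1" and h2: "hypergraph V2 C2" and disj: "V1 \<inter> V2 = {}"
  shows "hypergraph (V1 \<union> V2) (C1 \<union> C2)"
  unfolding hypergraph_def
proof (intro conjI ballI impI)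
  show "finite (V1 \<union> V2)" using h1 h2 unfolding hypergraph_def by simp
next
  fix E assume "E \<in> C1 \<union> C2"
  then show "E \<subseteq> V1 \<union> V2" "2 \<le> card E"
    using h1 h2 hypergraph_edge_subset hypergraph_card_edge by blast+
next
  fix E E' assume E: "E \<in> C1 \<union> C2" and E': "E' \<in> C1 \<union> C2" and "E \<subseteq> E'"
  moreover have "E \<noteq> {}" using E h1 h2 hypergraph_edge_nonempty by blast
  ultimately show "E = E'"
    using h1 h2 disj hypergraph_edge_subset[OF h1] hypergraph_edge_subset[OF h2]
      hypergraph_antichain[OF h1, of E E'] hypergraph_antichain[OF h2, of E E'] by blast
qed

lemma colon_subset_vertices:
  assumes h: "hypergraph V C" and G: "G \<in> colon C F"
  shows "G \<subseteq> V - (F \<union> nbhd C F)"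
proof -
  from G obtain E where E: "E \<in> C - {F}" "G = E - F" and card: "2 \<le> card G"
    and minimal: "\<not> (\<exists>H\<in>{E - F | E. E \<in> C - {F}}. H \<subset> G)"
    unfolding colon_def minimal_members_def by blast
  have "G \<inter> nbhd C F = {}"
  proof (rule ccontr)
    assume "G \<inter> nbhd C F \<noteq> {}"
    then obtain w E' where w: "w \<in> G" "E' \<in> C" "w \<in> E' - F" "card (E' - F) = 1"
      unfolding nbhd_def by blast
    then have "E' - F = {w}" by (metis card_1_singletonE singletonD)
    moreover have "{w} \<subset> G" using w card by (auto simp: psubset_eq)
    ultimately show False using minimal w by blast
  qed
  then show ?thesis using E hypergraph_edge_subset[OF h] by blast
qed

lemma hypergraph_colon:
  assumes h: "hypergraph V C"
  shows "hypergraph (V - (F \<union> nbhd C F)) (colon C F)"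
  unfolding hypergraph_def
proof (intro conjI ballI impI)
  show "finite (V - (F \<union> nbhd C F))" using h unfolding hypergraph_def by simp
next
  fix E assume "E \<in> colon C F"
  then show "E \<subseteq> V - (F \<union> nbhd C F)" "2 \<le> card E"
    using colon_subset_vertices[OF h] by (auto simp: colon_def)
next
  fix E E' assume "E \<in> colon C F" "E' \<in> colon C F" "E \<subseteq> E'"
  then show "E = E'" unfolding colon_def minimal_members_def by blast
qed

lemma card_colon_le:
  assumes h: "hypergraph V C"
  shows "card (colon C F) \<le> card C"
proof -
  have "colon C F \<subseteq> (\<lambda>E. E - F) ` C" unfolding colon_def minimal_members_def by blast
  then have "card (colon C F) \<le> card ((\<lambda>E. E - F) ` C)"
    using hypergraph_finite_edges[OF h] by (simp add: card_mono)
  also have "\<dots> \<le> card C" by (rule card_image_le[OF hypergraph_finite_edges[OF h]])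
  finally show ?thesis .
qed

definition psi_branch :: "'a set \<Rightarrow> 'a set set \<Rightarrow> 'a set \<Rightarrow> enat" where
  "psi_branch V C F =
     min (psi V (C - {F})) (psi (V - (F \<union> nbhd C F)) (colon C F) + enat (card F - 1))"

lemma psi_no_edges: "finite V \<Longrightarrow> psi V {} = (if V = {} then 0 else \<infinity>)"
  by (subst psi.simps) simp

lemma psi_eq_Max_psi_branch:
  assumes h: "hypergraph V C" and "C \<noteq> {}"
  shows "psi V C = Max (psi_branch V C ` C)"
proof -
  obtain E where "E \<in> C" using \<open>C \<noteq> {}\<close> by blast
  then have "V \<noteq> {}" using h hypergraph_edge_nonempty hypergraph_edge_subset by blast
  moreover have "finite V \<and> (\<forall>E\<in>C. E \<subseteq> V \<and> E \<noteq> {})"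
    using h hypergraph_edge_nonempty hypergraph_edge_subset unfolding hypergraph_def by blast
  ultimately show ?thesis
    using \<open>C \<noteq> {}\<close> unfolding psi_branch_def by (subst psi.simps) simp
qed

lemma minimal_members_Un_incomparable:
  assumes "\<And>A B. A \<in> \<A> \<Longrightarrow> B \<in> \<B> \<Longrightarrow> \<not> A \<subset> B \<and> \<not> B \<subset> A"
  shows "minimal_members (\<A> \<union> \<B>) = minimal_members \<A> \<union> minimal_members \<B>"
  using assms unfolding minimal_members_def by blast

lemma minimal_members_antichain: "hypergraph V C \<Longrightarrow> minimal_members C = C"
  unfolding minimal_members_def using hypergraph_antichain by blast

lemma
  assumes h1: "hypergraph V1 C1" and h2: "hypergraph V2 C2" and disj: "V1 \<inter> V2 = {}"
    and F: "F \<in> C1"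
  shows nbhd_disjoint_Un: "nbhd (C1 \<union> C2) F = nbhd C1 F"
    and colon_disjoint_Un: "colon (C1 \<union> C2) F = colon C1 F \<union> C2"
proof -
  have FV1: "F \<subseteq> V1" "F \<noteq> {}"
    using F hypergraph_edge_subset[OF h1] hypergraph_edge_nonempty[OF h1] by auto
  have unchanged: "E - F = E" if "E \<in> C2" for E
    using hypergraph_edge_subset[OF h2 that] FV1 disj by blast
  have "card (E - F) \<noteq> 1" if "E \<in> C2" for E
    using hypergraph_card_edge[OF h2 that] unchanged[OF that] by simp
  then show "nbhd (C1 \<union> C2) F = nbhd C1 F" unfolding nbhd_def by blast
  let ?R = "{E - F | E. E \<in> C1 - {F}}"
  have "(C1 \<union> C2) - {F} = (C1 - {F}) \<union> C2" using unchanged FV1 by blast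
  then have "{E - F | E. E \<in> (C1 \<union> C2) - {F}} = ?R \<union> (\<lambda>E. E - F) ` C2" by blast
  also have "(\<lambda>E. E - F) ` C2 = C2" using unchanged by simp
  finally have residues: "{E - F | E. E \<in> (C1 \<union> C2) - {F}} = ?R \<union> C2" .
  have residue_in_V1: "A \<noteq> {} \<and> A \<subseteq> V1" if "A \<in> ?R" for A
  proof -
    obtain E where E: "E \<in> C1" "E \<noteq> F" "A = E - F" using \<open>A \<in> ?R\<close> by blast
    then have "\<not> E \<subseteq> F" using hypergraph_antichain[OF h1 E(1) F] by blast
    then show ?thesis using E hypergraph_edge_subset[OF h1 E(1)] by blast
  qed
  have incomparable: "\<not> A \<subset> B \<and> \<not> B \<subset> A" if "A \<in> ?R" "B \<in> C2" for A B
  proof -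
    have "B \<noteq> {}" "B \<subseteq> V2"
      using hypergraph_edge_nonempty[OF h2 \<open>B \<in> C2\<close>] hypergraph_edge_subset[OF h2 \<open>B \<in> C2\<close>] .
    then show ?thesis using residue_in_V1[OF \<open>A \<in> ?R\<close>] disj by blast
  qed
  have "minimal_members (?R \<union> C2) = minimal_members ?R \<union> C2"
    using minimal_members_Un_incomparable[of ?R C2, OF incomparable] minimal_members_antichain[OF h2]
    by simp
  then show "colon (C1 \<union> C2) F = colon C1 F \<union> C2"
    unfolding colon_def residues using hypergraph_card_edge[OF h2] by blast
qed

lemma add_min_distrib_left:
  fixes x :: "'a::linordered_ab_semigroup_add"
  shows "x + min y z = min (x + y) (x + z)"
  by (rule min_of_mono[symmetric]) (simp add: mono_def add_left_mono)

lemma Max_image_Un_eqI: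
  assumes "finite A" "finite B" "A \<union> B \<noteq> {}"
    and "A \<noteq> {} \<Longrightarrow> Max (f ` A) = m" and "B \<noteq> {} \<Longrightarrow> Max (f ` B) = m"
  shows "Max (f ` (A \<union> B)) = m"
  using assms by (cases "A = {}"; cases "B = {}") (simp_all add: image_Un Max_Un)

lemma psi_branch_disjoint_Un:
  assumes h1: "hypergraph V1 C1" and h2: "hypergraph V2 C2" and disj: "V1 \<inter> V2 = {}"
    and F: "F \<in> C1"
    and IH: "\<And>W D. hypergraph W D \<Longrightarrow> W \<subseteq> V1 \<Longrightarrow> card W + card D < card V1 + card C1 \<Longrightarrow>
               psi (W \<union> V2) (D \<union> C2) = psi W D + psi V2 C2"
  shows "psi_branch (V1 \<union> V2) (C1 \<union> C2) F = psi_branch V1 C1 F + psi V2 C2"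
proof -
  have FV1: "F \<subseteq> V1" "F \<noteq> {}"
    using F hypergraph_edge_subset[OF h1] hypergraph_edge_nonempty[OF h1] by auto
  have "F \<notin> C2" using FV1 disj hypergraph_edge_subset[OF h2] by blast
  then have "(C1 \<union> C2) - {F} = (C1 - {F}) \<union> C2" by blast
  moreover have "card (C1 - {F}) < card C1"
    using hypergraph_finite_edges[OF h1] F by (rule card_Diff1_less)
  ultimately have deletion: "psi (V1 \<union> V2) ((C1 \<union> C2) - {F}) = psi V1 (C1 - {F}) + psi V2 C2"
    using IH[OF hypergraph_Diff_edge[OF h1]] by simp
  let ?W = "V1 - (F \<union> nbhd C1 F)"
  have "nbhd C1 F \<subseteq> V1" unfolding nbhd_def using hypergraph_edge_subset[OF h1] by blast
  then have "(V1 \<union> V2) - (F \<union> nbhd C1 F) = ?W \<union> V2" using FV1 disj by blast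
  moreover have "?W \<subset> V1" using FV1 by blast
  then have "card ?W < card V1"
    using h1 unfolding hypergraph_def by (simp add: psubset_card_mono)
  moreover have "card (colon C1 F) \<le> card C1" using card_colon_le[OF h1] .
  ultimately have contraction:
    "psi ((V1 \<union> V2) - (F \<union> nbhd C1 F)) (colon C1 F \<union> C2) = psi ?W (colon C1 F) + psi V2 C2"
    using IH[OF hypergraph_colon[OF h1]] by simp
  show ?thesis
    unfolding psi_branch_def nbhd_disjoint_Un[OF h1 h2 disj F] colon_disjoint_Un[OF h1 h2 disj F]
      deletion contraction
    by (simp add: add_min_distrib_left ac_simps)
qed

lemma Max_psi_branch_disjoint_Un:
  assumes h1: "hypergraph V1 C1" and h2: "hypergraph V2 C2" and disj: "V1 \<inter> V2 = {}"
    and "C1 \<noteq> {}"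
    and IH: "\<And>W D. hypergraph W D \<Longrightarrow> W \<subseteq> V1 \<Longrightarrow> card W + card D < card V1 + card C1 \<Longrightarrow>
               psi (W \<union> V2) (D \<union> C2) = psi W D + psi V2 C2"
  shows "Max (psi_branch (V1 \<union> V2) (C1 \<union> C2) ` C1) = psi V1 C1 + psi V2 C2"
proof -
  have "Max (psi_branch (V1 \<union> V2) (C1 \<union> C2) ` C1)
      = Max ((\<lambda>F. psi_branch V1 C1 F + psi V2 C2) ` C1)"
    using psi_branch_disjoint_Un[OF h1 h2 disj _ IH] by (simp cong: image_cong)
  also have "\<dots> = Max (psi_branch V1 C1 ` C1) + psi V2 C2"
    using hypergraph_finite_edges[OF h1] \<open>C1 \<noteq> {}\<close> by (rule Max_add_commute)
  finally show ?thesis using psi_eq_Max_psi_branch[OF h1 \<open>C1 \<noteq> {}\<close>] by simp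
qed

lemma psi_disjoint_Un:
  assumes "hypergraph V1 C1" and "hypergraph V2 C2" and "V1 \<inter> V2 = {}"
  shows "psi (V1 \<union> V2) (C1 \<union> C2) = psi V1 C1 + psi V2 C2"
  using assms
proof (induction "card V1 + card C1 + card V2 + card C2" arbitrary: V1 C1 V2 C2 rule: less_induct)
  case less
  note h1 = less.prems(1) and h2 = less.prems(2) and disj = less.prems(3)
  have Max1: "Max (psi_branch (V1 \<union> V2) (C1 \<union> C2) ` C1) = psi V1 C1 + psi V2 C2"
    if "C1 \<noteq> {}"
  proof (rule Max_psi_branch_disjoint_Un[OF h1 h2 disj that])
    fix W D assume "hypergraph W D" "W \<subseteq> V1" "card W + card D < card V1 + card C1"
    then show "psi (W \<union> V2) (D \<union> C2) = psi W D + psi V2 C2"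
      by (intro less.hyps) (use h2 disj in auto)
  qed
  have Max2: "Max (psi_branch (V1 \<union> V2) (C1 \<union> C2) ` C2) = psi V1 C1 + psi V2 C2"
    if "C2 \<noteq> {}"
  proof -
    have "Max (psi_branch (V2 \<union> V1) (C2 \<union> C1) ` C2) = psi V2 C2 + psi V1 C1"
    proof (rule Max_psi_branch_disjoint_Un[OF h2 h1 _ that])
      show "V2 \<inter> V1 = {}" using disj by blast
      fix W D assume "hypergraph W D" "W \<subseteq> V2" "card W + card D < card V2 + card C2"
      then have "psi (V1 \<union> W) (C1 \<union> D) = psi V1 C1 + psi W D"
        by (intro less.hyps) (use h1 disj in auto)
      then show "psi (W \<union> V1) (D \<union> C1) = psi W D + psi V1 C1"
        by (simp add: Un_commute add.commute)
    qed
    then show ?thesis by (simp add: Un_commute add.commute)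
  qed
  show ?case
  proof (cases "C1 \<union> C2 = {}")
    case True
    have "finite V1" "finite V2" using h1 h2 unfolding hypergraph_def by blast+
    with True show ?thesis by (simp add: psi_no_edges)
  next
    case False
    have "psi (V1 \<union> V2) (C1 \<union> C2) = Max (psi_branch (V1 \<union> V2) (C1 \<union> C2) ` (C1 \<union> C2))"
      using psi_eq_Max_psi_branch[OF hypergraph_disjoint_Un[OF h1 h2 disj] False] .
    also have "\<dots> = psi V1 C1 + psi V2 C2"
      using hypergraph_finite_edges[OF h1] hypergraph_finite_edges[OF h2] False Max1 Max2
      by (rule Max_image_Un_eqI)
    finally show ?thesis .
  qed
qed

lemma join_Ind_disjoint:
  assumes h1: "hypergraph V1 C1" and h2: "hypergraph V2 C2" and disj: "V1 \<inter> V2 = {}"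
  shows "join (Ind V1 C1) (Ind V2 C2) = Ind (V1 \<union> V2) (C1 \<union> C2)"
proof
  show "join (Ind V1 C1) (Ind V2 C2) \<subseteq> Ind (V1 \<union> V2) (C1 \<union> C2)"
  proof
    fix S assume "S \<in> join (Ind V1 C1) (Ind V2 C2)"
    then obtain S1 S2 where S: "S = S1 \<union> S2" and S1: "S1 \<in> Ind V1 C1" and S2: "S2 \<in> Ind V2 C2"
      unfolding join_def by blast
    have "S \<subseteq> V1 \<union> V2" using S S1 S2 unfolding Ind_def by blast
    moreover have "\<not> E \<subseteq> S" if "E \<in> C1" for E
    proof
      assume "E \<subseteq> S"
      moreover have "E \<subseteq> V1" "S2 \<subseteq> V2"
        using hypergraph_edge_subset[OF h1 that] S2 unfolding Ind_def by auto
      ultimately have "E \<subseteq> S1" using S disj by blast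
      then show False using S1 that unfolding Ind_def by blast
    qed
    moreover have "\<not> E \<subseteq> S" if "E \<in> C2" for E
    proof
      assume "E \<subseteq> S"
      moreover have "E \<subseteq> V2" "S1 \<subseteq> V1"
        using hypergraph_edge_subset[OF h2 that] S1 unfolding Ind_def by auto
      ultimately have "E \<subseteq> S2" using S disj by blast
      then show False using S2 that unfolding Ind_def by blast
    qed
    ultimately show "S \<in> Ind (V1 \<union> V2) (C1 \<union> C2)" unfolding Ind_def by blast
  qed
next
  show "Ind (V1 \<union> V2) (C1 \<union> C2) \<subseteq> join (Ind V1 C1) (Ind V2 C2)"
  proof
    fix S assume S: "S \<in> Ind (V1 \<union> V2) (C1 \<union> C2)"
    then have "S \<inter> V1 \<in> Ind V1 C1" "S \<inter> V2 \<in> Ind V2 C2" "S = (S \<inter> V1) \<union> (S \<inter> V2)"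
      unfolding Ind_def by blast+
    then show "S \<in> join (Ind V1 C1) (Ind V2 C2)" unfolding join_def by blast
  qed
qed

lemma min_nonfaces_Ind:
  assumes h: "hypergraph V C"
  shows "min_nonfaces V (Ind V C) = C"
proof
  show "min_nonfaces V (Ind V C) \<subseteq> C"
  proof
    fix S assume S: "S \<in> min_nonfaces V (Ind V C)"
    then obtain E where E: "E \<in> C" "E \<subseteq> S" unfolding min_nonfaces_def Ind_def by blast
    then have "E \<notin> Ind V C" unfolding Ind_def by blast
    with S E have "E = S" unfolding min_nonfaces_def by blast
    with E show "S \<in> C" by simp
  qed
next
  show "C \<subseteq> min_nonfaces V (Ind V C)"
  proof
    fix S assume S: "S \<in> C"
    have "T \<in> Ind V C" if "T \<subset> S" for T
      using that S hypergraph_edge_subset[OF h S] hypergraph_antichain[OF h _ S]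
      unfolding Ind_def by blast
    then show "S \<in> min_nonfaces V (Ind V C)"
      using S hypergraph_edge_subset[OF h S] unfolding min_nonfaces_def Ind_def by blast
  qed
qed

theorem proposition3p5:
  fixes V1 V2 :: "'a set" and C1 C2 :: "'a set set"
  assumes "hypergraph V1 C1" and "hypergraph V2 C2" and "V1 \<inter> V2 = {}"
  shows "psi (V1 \<union> V2) (min_nonfaces (V1 \<union> V2) (join (Ind V1 C1) (Ind V2 C2)))
         = psi V1 C1 + psi V2 C2"
proof -
  have "min_nonfaces (V1 \<union> V2) (join (Ind V1 C1) (Ind V2 C2)) = C1 \<union> C2"
    using join_Ind_disjoint[OF assms] min_nonfaces_Ind[OF hypergraph_disjoint_Un[OF assms]]
    by simp
  then show ?thesis using psi_disjoint_Un[OF assms] by simp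
qed

end
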